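(* Let $(X,\rho)$ be a compact metric space with at least two points and let $T\colon X\to X$ be continuous and topologically weakly mixing. Then for every $d>1$ there is $\delta_d>0$ such that the set of $\delta_d$-Li-Yorke $d$-tuples is residual in $X^d$.
   Context: $T$ is topologically weakly mixing if $T\times T$ is topologically transitive on $X\times X$. A $d$-tuple is $\delta$-Li-Yorke if $\liminf_n\max_{i,j}\rho(T^nx_i,T^nx_j)=0$ and $\limsup_n\min_{i\ne j}\rho(T^nx_i,T^nx_j)>\delta$. Residual means containing a dense $G_\delta$ set. *)

theory Defs
  imports "HOL-Analysis.Analysis"
begin

definition top_transitive :: "'b topology \<Rightarrow> ('b \<Rightarrow> 'b) \<Rightarrow> bool" where
  "top_transitive Y S \<longleftrightarrow>
     (\<forall>U V. openin Y U \<and> openin Y V \<and> U \<noteq> {} \<and> V \<noteq> {} \<longrightarrow>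
        (\<exists>n\<ge>1. {p \<in> topspace Y. (S ^^ n) p \<in> U} \<inter> V \<noteq> {}))"

definition weakly_mixing :: "'a::metric_space set \<Rightarrow> ('a \<Rightarrow> 'a) \<Rightarrow> bool" where
  "weakly_mixing X T \<longleftrightarrow>
     top_transitive (prod_topology (top_of_set X) (top_of_set X)) (\<lambda>(x, y). (T x, T y))"

definition li_yorke_tuple :: "('a::metric_space \<Rightarrow> 'a) \<Rightarrow> nat \<Rightarrow> real \<Rightarrow> (nat \<Rightarrow> 'a) \<Rightarrow> bool" where
  "li_yorke_tuple T d \<delta> x \<longleftrightarrow>
     liminf (\<lambda>n. ereal (Max {dist ((T ^^ n) (x i)) ((T ^^ n) (x j)) | i j. i < d \<and> j < d})) = 0 \<and>
     limsup (\<lambda>n. ereal (Min {dist ((T ^^ n) (x i)) ((T ^^ n) (x j)) | i j. i < d \<and> j < d \<and> i \<noteq> j}))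
        > ereal \<delta>"

definition residual_in :: "'b topology \<Rightarrow> 'b set \<Rightarrow> bool" where
  "residual_in Y A \<longleftrightarrow> (\<exists>G. gdelta_in Y G \<and> Y closure_of G = topspace Y \<and> G \<subseteq> A)"

end

theory Submission
  imports Defs "HOL-Analysis.Analysis"
begin

(*
  Write N(V, U) = {n. T^n(V) meets U} for the hitting times of a pair of nonempty open sets.
  Weak mixing says that any two such pairs share a hitting time n >= 1.  Following Furstenberg,
  one pair (A, B) can be chosen with N(B, A) contained in the common hitting times of any
  finitely many given pairs; since T is onto (X is compact), every N(B, A) is unbounded.
  Hence for nonempty open targets C 0, ..., C (d - 1) and any k, the tuples x in X^d with
  T^n(x i) in C i for all i at some common time n >= k form a dense open set.  By Baire's
  theorem, visiting each of countably many target families infinitely often is a residual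
  property.  Taking as targets the shrinking balls around one point (for all coordinates at once)
  and the balls of radius r around d points 4 r apart, a residual set of tuples is frequently
  arbitrarily tight and frequently 2 r separated, i.e. r-Li-Yorke.
*)

lemma Liminf_le_of_frequently:
  fixes f :: "'b \<Rightarrow> 'c::complete_linorder"
  assumes "frequently (\<lambda>x. f x < c) F"
  shows "Liminf F f \<le> c"
proof (rule ccontr)
  assume "\<not> Liminf F f \<le> c"
  then have "eventually (\<lambda>x. c < f x) F"
    using le_Liminf_iff[of "Liminf F f" F f] by (simp add: not_le)
  then have "eventually (\<lambda>x. \<not> f x < c) F" by (rule eventually_mono) auto
  with assms show False by (simp add: frequently_def)
qed

lemma le_Limsup_of_frequently:
  fixes f :: "'b \<Rightarrow> 'c::complete_linorder"
  assumes "frequently (\<lambda>x. c < f x) F"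
  shows "c \<le> Limsup F f"
proof (rule ccontr)
  assume "\<not> c \<le> Limsup F f"
  then have "eventually (\<lambda>x. f x < c) F"
    using Limsup_le_iff[where C="Limsup F f" and F=F and X=f] by (simp add: not_le)
  then have "eventually (\<lambda>x. \<not> c < f x) F" by (rule eventually_mono) auto
  with assms show False by (simp add: frequently_def)
qed

lemma liminf_eq_0_of_frequently_small:
  fixes f :: "nat \<Rightarrow> ereal"
  assumes nonneg: "\<And>n. 0 \<le> f n"
    and small: "\<And>\<epsilon>. \<epsilon> > 0 \<Longrightarrow> \<exists>\<^sub>F n in sequentially. f n < ereal \<epsilon>"
  shows "liminf f = 0"
proof (rule antisym)
  show "liminf f \<le> 0"
  proof (rule ereal_le_epsilon2)
    fix \<epsilon> :: real assume "0 < \<epsilon>"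
    then show "liminf f \<le> 0 + ereal \<epsilon>"
      using Liminf_le_of_frequently[OF small] by simp
  qed
  show "0 \<le> liminf f" by (rule Liminf_bounded) (simp add: nonneg)
qed

lemma finite_pairwise_values: "finite {f i j | i j. i < (d::nat) \<and> j < d}"
  by (rule finite_image_set2) auto

lemma finite_offdiagonal_values: "finite {f i j | i j. i < (d::nat) \<and> j < d \<and> i \<noteq> j}"
  by (rule finite_subset[OF _ finite_pairwise_values]) auto

lemma li_yorke_tupleI:
  fixes T :: "'a::metric_space \<Rightarrow> 'a" and x :: "nat \<Rightarrow> 'a"
  assumes "d > 1" "\<delta> > 0"
    and close: "\<And>\<epsilon>. \<epsilon> > 0 \<Longrightarrow>
      \<exists>\<^sub>F n in sequentially. \<forall>i<d. \<forall>j<d. dist ((T ^^ n) (x i)) ((T ^^ n) (x j)) < \<epsilon>"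
    and apart: "\<exists>\<^sub>F n in sequentially.
      \<forall>i<d. \<forall>j<d. i \<noteq> j \<longrightarrow> 2 * \<delta> < dist ((T ^^ n) (x i)) ((T ^^ n) (x j))"
  shows "li_yorke_tuple T d \<delta> x"
proof -
  let ?D = "\<lambda>n i j. dist ((T ^^ n) (x i)) ((T ^^ n) (x j))"
  let ?diam = "\<lambda>n. Max {?D n i j | i j. i < d \<and> j < d}"
  let ?sep = "\<lambda>n. Min {?D n i j | i j. i < d \<and> j < d \<and> i \<noteq> j}"
  have diag: "?D n 0 0 \<in> {?D n i j | i j. i < d \<and> j < d}" for n
    using \<open>d > 1\<close> by auto
  have offdiag: "?D n 0 1 \<in> {?D n i j | i j. i < d \<and> j < d \<and> i \<noteq> j}" for n
    using \<open>d > 1\<close> by force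
  have diam_pos: "0 \<le> ?diam n" for n
    using diag by (simp add: Max_ge_iff finite_pairwise_values)
  have liminf_diam: "liminf (\<lambda>n. ereal (?diam n)) = 0"
  proof (rule liminf_eq_0_of_frequently_small)
    fix \<epsilon> :: real assume "\<epsilon> > 0"
    show "\<exists>\<^sub>F n in sequentially. ereal (?diam n) < ereal \<epsilon>"
      using close[OF \<open>\<epsilon> > 0\<close>]
    proof (rule frequently_elim1)
      fix n assume "\<forall>i<d. \<forall>j<d. ?D n i j < \<epsilon>"
      then show "ereal (?diam n) < ereal \<epsilon>"
        using diag[of n] by (subst less_ereal.simps(1), subst Max_less_iff) (auto simp: finite_pairwise_values)
    qed
  qed (use diam_pos in simp)
  have "ereal (2 * \<delta>) \<le> limsup (\<lambda>n. ereal (?sep n))"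
  proof (rule le_Limsup_of_frequently)
    show "\<exists>\<^sub>F n in sequentially. ereal (2 * \<delta>) < ereal (?sep n)"
      using apart
    proof (rule frequently_elim1)
      fix n assume "\<forall>i<d. \<forall>j<d. i \<noteq> j \<longrightarrow> 2 * \<delta> < ?D n i j"
      then show "ereal (2 * \<delta>) < ereal (?sep n)"
        using offdiag[of n] by (subst less_ereal.simps(1), subst Min_gr_iff) (auto simp: finite_offdiagonal_values)
    qed
  qed
  moreover have "ereal \<delta> < ereal (2 * \<delta>)" using \<open>\<delta> > 0\<close> by simp
  ultimately have "ereal \<delta> < limsup (\<lambda>n. ereal (?sep n))" by (rule order.strict_trans2[rotated])
  with liminf_diam show ?thesis unfolding li_yorke_tuple_def by simp
qed

lemma residual_in_mono: "residual_in Y A \<Longrightarrow> A \<subseteq> B \<Longrightarrow> residual_in Y B"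
  unfolding residual_in_def by blast

lemma residual_in_countable_Inter:
  assumes "compact_space Y" "Hausdorff_space Y" "countable \<G>"
    and open_dense: "\<And>U. U \<in> \<G> \<Longrightarrow> openin Y U \<and> Y closure_of U = topspace Y"
  shows "residual_in Y (\<Inter>(insert (topspace Y) \<G>))"
proof -
  let ?G = "\<Inter>(insert (topspace Y) \<G>)"
  have "locally_compact_space Y \<and> regular_space Y"
    using assms(1,2) compact_imp_locally_compact_space compact_Hausdorff_imp_regular_space by blast
  then have "Y closure_of ?G = topspace Y"
    using assms(3) open_dense by (intro Baire_category) auto
  moreover have "gdelta_in Y ?G"
    using assms(3) open_dense by (intro gdelta_in_Inter open_imp_gdelta_in) auto
  ultimately show ?thesis unfolding residual_in_def by blast
qed

lemma dist_lt_of_mem_ball: "a \<in> ball c r \<Longrightarrow> b \<in> ball c r \<Longrightarrow> dist a b < 2 * r"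
  by (smt (verit, best) dist_commute dist_triangle mem_ball)

lemma dist_gt_of_mem_balls:
  "a \<in> ball p r \<Longrightarrow> b \<in> ball q r \<Longrightarrow> 4 * r \<le> dist p q \<Longrightarrow> 2 * r < dist a b"
  by (smt (verit, best) dist_commute dist_triangle mem_ball)

lemma finite_points_separated:
  fixes y :: "nat \<Rightarrow> 'a::metric_space"
  assumes "inj_on y {..<d}"
  shows "\<exists>r>0. \<forall>i<d. \<forall>j<d. i \<noteq> j \<longrightarrow> r \<le> dist (y i) (y j)"
proof -
  let ?S = "insert 1 {dist (y i) (y j) | i j. i < d \<and> j < d \<and> i \<noteq> j}"
  have "finite ?S" by (simp add: finite_offdiagonal_values)
  moreover have "\<forall>s\<in>?S. 0 < s" using assms by (auto simp: inj_on_eq_iff)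
  ultimately have "Min ?S > 0" by (subst Min_gr_iff) auto
  moreover have "\<forall>i<d. \<forall>j<d. i \<noteq> j \<longrightarrow> Min ?S \<le> dist (y i) (y j)"
    using \<open>finite ?S\<close> by (auto intro: Min_le)
  ultimately show ?thesis by (intro exI[of _ "Min ?S"]) simp
qed

lemma li_yorke_of_frequent_visits:
  fixes T :: "'a::metric_space \<Rightarrow> 'a" and x y :: "nat \<Rightarrow> 'a"
  assumes "d > 1" "r > 0" and separated: "\<forall>i<d. \<forall>j<d. i \<noteq> j \<longrightarrow> 4 * r \<le> dist (y i) (y j)"
    and close: "\<And>m. \<exists>\<^sub>F n in sequentially.
      \<forall>i<d. (T ^^ n) (x i) \<in> S \<inter> ball c (inverse (Suc m) / 2)"
    and apart: "\<exists>\<^sub>F n in sequentially. \<forall>i<d. (T ^^ n) (x i) \<in> S \<inter> ball (y i) r"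
  shows "li_yorke_tuple T d r x"
proof (rule li_yorke_tupleI[OF assms(1,2)])
  fix \<epsilon> :: real assume "\<epsilon> > 0"
  then obtain m where m: "inverse (real (Suc m)) < \<epsilon>" using reals_Archimedean by blast
  show "\<exists>\<^sub>F n in sequentially. \<forall>i<d. \<forall>j<d. dist ((T ^^ n) (x i)) ((T ^^ n) (x j)) < \<epsilon>"
    using close[of m]
  proof (rule frequently_elim1)
    fix n assume "\<forall>i<d. (T ^^ n) (x i) \<in> S \<inter> ball c (inverse (Suc m) / 2)"
    then show "\<forall>i<d. \<forall>j<d. dist ((T ^^ n) (x i)) ((T ^^ n) (x j)) < \<epsilon>"
      using dist_lt_of_mem_ball m by fastforce
  qed
next
  show "\<exists>\<^sub>F n in sequentially.
      \<forall>i<d. \<forall>j<d. i \<noteq> j \<longrightarrow> 2 * r < dist ((T ^^ n) (x i)) ((T ^^ n) (x j))"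
    using apart by (rule frequently_elim1) (use separated dist_gt_of_mem_balls in blast)
qed

definition hitting_times :: "('a \<Rightarrow> 'a) \<Rightarrow> 'a set \<Rightarrow> 'a set \<Rightarrow> nat set" where
  "hitting_times T V U = {n. \<exists>v\<in>V. (T ^^ n) v \<in> U}"

lemma funpow_prod_map:
  fixes T :: "'a \<Rightarrow> 'a"
  shows "((\<lambda>(x, y). (T x, T y)) ^^ n) (a, b) = ((T ^^ n) a, (T ^^ n) b)"
  by (induction n) simp_all

locale weakly_mixing_system =
  fixes X :: "'a::metric_space set" and T :: "'a \<Rightarrow> 'a"
  assumes compact: "compact X" and nonempty: "X \<noteq> {}"
    and continuous: "continuous_on X T" and maps_into: "T ` X \<subseteq> X"
    and mixing: "weakly_mixing X T"
begin

abbreviation nonempty_open :: "'a set \<Rightarrow> bool" where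
  "nonempty_open U \<equiv> openin (top_of_set X) U \<and> U \<noteq> {}"

lemma iterate_in: "x \<in> X \<Longrightarrow> (T ^^ n) x \<in> X"
  using maps_into by (induction n) auto

lemma continuous_map_iterate: "continuous_map (top_of_set X) (top_of_set X) (T ^^ n)"
proof (induction n)
  case (Suc n)
  have "continuous_map (top_of_set X) (top_of_set X) T"
    using continuous maps_into by (auto simp: Pi_def)
  then show ?case unfolding funpow.simps by (rule continuous_map_compose[OF Suc])
qed simp

lemma openin_iterate_preimage:
  "openin (top_of_set X) U \<Longrightarrow> openin (top_of_set X) {x \<in> X. (T ^^ n) x \<in> U}"
  using openin_continuous_map_preimage[OF continuous_map_iterate] by simp

lemma common_hitting_time:
  assumes "nonempty_open U1" "nonempty_open U2" "nonempty_open V1" "nonempty_open V2"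
  shows "\<exists>n\<ge>1. n \<in> hitting_times T V1 U1 \<inter> hitting_times T V2 U2"
proof -
  let ?XX = "prod_topology (top_of_set X) (top_of_set X)"
  let ?TT = "\<lambda>(x, y). (T x, T y)"
  have opens: "openin ?XX (U1 \<times> U2)" "openin ?XX (V1 \<times> V2)"
    unfolding openin_prod_Times_iff using assms by blast+
  have products_nonempty: "U1 \<times> U2 \<noteq> {}" "V1 \<times> V2 \<noteq> {}"
    using assms by auto
  have "top_transitive ?XX ?TT" using mixing by (simp add: weakly_mixing_def)
  then have "\<exists>n\<ge>1. {p \<in> topspace ?XX. (?TT ^^ n) p \<in> U1 \<times> U2} \<inter> (V1 \<times> V2) \<noteq> {}"
    by (rule top_transitive_def[THEN iffD1, rule_format]) (intro conjI opens products_nonempty)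
  then obtain n where "n \<ge> 1" and "{p \<in> topspace ?XX. (?TT ^^ n) p \<in> U1 \<times> U2} \<inter> (V1 \<times> V2) \<noteq> {}"
    by (elim exE conjE) (rule that)
  then obtain p where "p \<in> {p \<in> topspace ?XX. (?TT ^^ n) p \<in> U1 \<times> U2}" "p \<in> V1 \<times> V2"
    by (meson disjoint_iff)
  moreover obtain a b where "p = (a, b)" by (cases p)
  ultimately have "a \<in> V1" "b \<in> V2" "(?TT ^^ n) (a, b) \<in> U1 \<times> U2"
    by auto
  then show ?thesis
    using \<open>n \<ge> 1\<close> by (auto simp: funpow_prod_map hitting_times_def)
qed

text \<open>The map is onto: \<open>T ` X\<close> is compact, and a nonempty open set avoiding it could never be
  hit.  Consequently all iterates are onto.\<close>
lemma surjective: "T ` X = X"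
proof (rule ccontr)
  assume "T ` X \<noteq> X"
  then have missed: "X - T ` X \<noteq> {}" using maps_into by auto
  have "closed (T ` X)"
    using compact_continuous_image[OF continuous compact] by (rule compact_imp_closed)
  then have "openin (top_of_set X) (X - T ` X)"
    by (simp add: Diff_eq openin_open_Int open_Compl)
  with missed have "nonempty_open (X - T ` X)" by blast
  moreover have "nonempty_open X" using nonempty by simp
  ultimately obtain n where "n \<ge> 1" "n \<in> hitting_times T X (X - T ` X)"
    using common_hitting_time by blast
  then obtain v m where "v \<in> X" "(T ^^ Suc m) v \<in> X - T ` X"
    unfolding hitting_times_def by (cases n) auto
  then show False using iterate_in[of v m] by auto
qed

lemma iterate_surjective: "(T ^^ k) ` X = X"
  by (induction k) (simp_all add: surjective flip: image_image)

lemma hitting_times_refine_pair: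
  assumes "nonempty_open U" "nonempty_open V" "nonempty_open U'" "nonempty_open V'"
  shows "\<exists>A B. nonempty_open A \<and> nonempty_open B \<and>
           hitting_times T B A \<subseteq> hitting_times T V U \<inter> hitting_times T V' U'"
proof -
  obtain m where "m \<in> hitting_times T U U' \<inter> hitting_times T V V'"
    using common_hitting_time[OF assms(3,4,1,2)] by blast
  then obtain u v where "u \<in> U" "(T ^^ m) u \<in> U'" "v \<in> V" "(T ^^ m) v \<in> V'"
    unfolding hitting_times_def by blast
  define A where "A = U \<inter> {x \<in> X. (T ^^ m) x \<in> U'}"
  define B where "B = V \<inter> {x \<in> X. (T ^^ m) x \<in> V'}"
  have "U \<subseteq> X" "V \<subseteq> X" using assms by (auto dest: openin_imp_subset)
  then have "u \<in> A" "v \<in> B"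
    unfolding A_def B_def using \<open>u \<in> U\<close> \<open>(T ^^ m) u \<in> U'\<close> \<open>v \<in> V\<close> \<open>(T ^^ m) v \<in> V'\<close> by auto
  moreover have "openin (top_of_set X) A" "openin (top_of_set X) B"
    unfolding A_def B_def using assms by (auto intro: openin_Int openin_iterate_preimage)
  ultimately have "nonempty_open A" "nonempty_open B" by auto
  moreover have "hitting_times T B A \<subseteq> hitting_times T V U \<inter> hitting_times T V' U'"
  proof
    fix n assume hit: "n \<in> hitting_times T B A"
    obtain b where b: "b \<in> B" "(T ^^ n) b \<in> A"
      using hit unfolding hitting_times_def by blast
    have "(T ^^ m) ((T ^^ n) b) = (T ^^ n) ((T ^^ m) b)"
      by (metis add.commute comp_apply funpow_add)
    then show "n \<in> hitting_times T V U \<inter> hitting_times T V' U'"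
      using b unfolding A_def B_def hitting_times_def by (auto intro: bexI[of _ "(T ^^ m) b"])
  qed
  ultimately show ?thesis by (intro exI[of _ A] exI[of _ B]) simp
qed

lemma hitting_times_refine:
  fixes d :: nat
  assumes "\<forall>i<d. nonempty_open (U i) \<and> nonempty_open (V i)"
  shows "\<exists>A B. nonempty_open A \<and> nonempty_open B \<and>
           hitting_times T B A \<subseteq> (\<Inter>i<d. hitting_times T (V i) (U i))"
  using assms
proof (induction d)
  case 0
  show ?case using nonempty by blast
next
  case (Suc d)
  have "\<forall>i<d. nonempty_open (U i) \<and> nonempty_open (V i)"
    using Suc.prems by simp
  then obtain A B where AB: "nonempty_open A" "nonempty_open B"
      "hitting_times T B A \<subseteq> (\<Inter>i<d. hitting_times T (V i) (U i))"
    using Suc.IH by (auto intro: that)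
  have last: "nonempty_open (U d)" "nonempty_open (V d)"
    using Suc.prems by simp_all
  obtain A' B' where A'B': "nonempty_open A'" "nonempty_open B'"
      "hitting_times T B' A' \<subseteq> hitting_times T B A \<inter> hitting_times T (V d) (U d)"
    using hitting_times_refine_pair[OF AB(1,2) last] by (elim exE conjE) (auto intro: that)
  have "(\<Inter>i<Suc d. hitting_times T (V i) (U i)) =
      (\<Inter>i<d. hitting_times T (V i) (U i)) \<inter> hitting_times T (V d) (U d)"
    by (simp add: lessThan_Suc Int_commute)
  then have "hitting_times T B' A' \<subseteq> (\<Inter>i<Suc d. hitting_times T (V i) (U i))"
    using AB(3) A'B'(3) by (simp only:) blast
  with A'B'(1,2) show ?case by (intro exI conjI) simp_all
qed

text \<open>Hitting times are unbounded: a hit of the (nonempty, by surjectivity) open set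
  \<open>T\<^sup>-\<^sup>k A\<close> at time \<open>n\<close> is a hit of \<open>A\<close> at time \<open>k + n\<close>.\<close>
lemma hitting_times_unbounded:
  assumes "nonempty_open A" "nonempty_open B"
  shows "\<exists>n\<ge>k. n \<in> hitting_times T B A"
proof -
  let ?A' = "{x \<in> X. (T ^^ k) x \<in> A}"
  obtain a where "a \<in> A" using assms(1) by blast
  moreover have "A \<subseteq> X" using assms(1) by (auto dest: openin_imp_subset)
  ultimately obtain x where "x \<in> X" "(T ^^ k) x = a"
    using iterate_surjective[of k] by (metis imageE subsetD)
  then have "x \<in> ?A'" using \<open>a \<in> A\<close> by simp
  moreover have "openin (top_of_set X) ?A'"
    using assms(1) by (simp add: openin_iterate_preimage)
  ultimately have "nonempty_open ?A'" by blast
  from common_hitting_time[OF this this assms(2) assms(2)]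
  obtain n where "n \<in> hitting_times T B ?A'" by blast
  then obtain b where "b \<in> B" "(T ^^ n) b \<in> ?A'"
    unfolding hitting_times_def by blast
  then have "(T ^^ (k + n)) b \<in> A" by (simp add: funpow_add)
  with \<open>b \<in> B\<close> show ?thesis unfolding hitting_times_def by (intro exI[of _ "k + n"]) auto
qed

lemma simultaneous_hitting_time:
  fixes d :: nat
  assumes "\<forall>i<d. nonempty_open (U i) \<and> nonempty_open (V i)"
  shows "\<exists>n\<ge>k. \<forall>i<d. n \<in> hitting_times T (V i) (U i)"
proof -
  obtain A B where AB: "nonempty_open A" "nonempty_open B"
      and sub: "hitting_times T B A \<subseteq> (\<Inter>i<d. hitting_times T (V i) (U i))"
    using hitting_times_refine[OF assms] by (elim exE conjE) (auto intro: that)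
  obtain n where "n \<ge> k" "n \<in> hitting_times T B A"
    using hitting_times_unbounded[OF AB] by blast
  moreover from this(2) sub have "\<forall>i<d. n \<in> hitting_times T (V i) (U i)" by auto
  ultimately show ?thesis by auto
qed

abbreviation power_topology :: "nat \<Rightarrow> (nat \<Rightarrow> 'a) topology" where
  "power_topology d \<equiv> product_topology (\<lambda>_. top_of_set X) {..<d}"

definition visit_set :: "nat \<Rightarrow> (nat \<Rightarrow> 'a set) \<Rightarrow> nat \<Rightarrow> (nat \<Rightarrow> 'a) set" where
  "visit_set d C k = {x \<in> topspace (power_topology d). \<exists>n\<ge>k. \<forall>i<d. (T ^^ n) (x i) \<in> C i}"

lemma openin_visit_set:
  assumes "\<forall>i<d. openin (top_of_set X) (C i)"
  shows "openin (power_topology d) (visit_set d C k)"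
proof -
  let ?P = "power_topology d"
  have visit_eq: "visit_set d C k =
      (\<Union>n\<in>{k..}. ((\<Inter>i\<in>{..<d}. {x \<in> topspace ?P. (T ^^ n) (x i) \<in> C i}) \<inter> topspace ?P))"
    unfolding visit_set_def by auto
  have coordinate_open: "openin ?P {x \<in> topspace ?P. (T ^^ n) (x i) \<in> C i}" if "i < d" for n i
  proof -
    have "continuous_map ?P (top_of_set X) ((T ^^ n) \<circ> (\<lambda>x. x i))"
      using that by (intro continuous_map_compose[OF continuous_map_product_projection[of i]
          continuous_map_iterate]) simp
    then show ?thesis
      using openin_continuous_map_preimage assms that by fastforce
  qed
  have "openin ?P ((\<Inter>i\<in>{..<d}. {x \<in> topspace ?P. (T ^^ n) (x i) \<in> C i}) \<inter> topspace ?P)"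
    for n by (rule openin_INT) (simp, rule coordinate_open, simp)
  then show ?thesis unfolding visit_eq by (intro openin_Union) blast
qed

text \<open>Density of the visit sets is where weak mixing enters: a basic open box
  \<open>W 0 \<times> \<dots> \<times> W (d - 1)\<close> contains a tuple visiting all targets at a common time.\<close>
lemma dense_visit_set:
  assumes "\<forall>i<d. nonempty_open (C i)"
  shows "power_topology d closure_of visit_set d C k = topspace (power_topology d)"
  unfolding dense_intersects_open
proof (intro allI impI)
  fix G assume "openin (power_topology d) G \<and> G \<noteq> {}"
  then obtain x W where box: "\<forall>i\<in>{..<d}. openin (top_of_set X) (W i)"
      "x \<in> Pi\<^sub>E {..<d} W" "Pi\<^sub>E {..<d} W \<subseteq> G"
    unfolding openin_product_topology_alt by (metis all_not_in_conv)
  then have "\<forall>i<d. nonempty_open (C i) \<and> nonempty_open (W i)"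
    using assms by (auto simp: PiE_iff)
  from simultaneous_hitting_time[OF this, of k]
  obtain n where "n \<ge> k" "\<forall>i<d. n \<in> hitting_times T (W i) (C i)"
    by blast
  then have "\<forall>i\<in>{..<d}. \<exists>w. w \<in> W i \<and> (T ^^ n) w \<in> C i"
    unfolding hitting_times_def by blast
  then obtain w where w: "\<forall>i\<in>{..<d}. w i \<in> W i \<and> (T ^^ n) (w i) \<in> C i"
    by (auto dest!: bchoice)
  define z where "z = restrict w {..<d}"
  have "z \<in> Pi\<^sub>E {..<d} W" unfolding z_def using w by auto
  moreover have "Pi\<^sub>E {..<d} W \<subseteq> topspace (power_topology d)"
    using box(1) by (auto simp: PiE_iff dest: openin_imp_subset)
  moreover have "\<forall>i<d. (T ^^ n) (z i) \<in> C i" unfolding z_def using w by simp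
  ultimately have "z \<in> visit_set d C k \<inter> G"
    unfolding visit_set_def using \<open>n \<ge> k\<close> box(3) by blast
  then show "visit_set d C k \<inter> G \<noteq> {}" by blast
qed

lemma residual_frequent_visits:
  assumes "countable \<C>" "\<And>C. C \<in> \<C> \<Longrightarrow> \<forall>i<d. nonempty_open (C i)"
  shows "residual_in (power_topology d)
      {x \<in> topspace (power_topology d).
         \<forall>C\<in>\<C>. \<exists>\<^sub>F n in sequentially. \<forall>i<d. (T ^^ n) (x i) \<in> C i}"
proof -
  let ?P = "power_topology d"
  let ?\<G> = "(\<lambda>(C, k). visit_set d C k) ` (\<C> \<times> UNIV)"
  have "compact_space ?P"
    using compact by (simp add: compact_space_product_topology compact_space_subtopology)
  moreover have "Hausdorff_space ?P"
    by (simp add: Hausdorff_space_product_topology Hausdorff_space_subtopology)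
  moreover have "countable ?\<G>" using assms(1) by simp
  moreover have "openin ?P U \<and> ?P closure_of U = topspace ?P" if "U \<in> ?\<G>" for U
    using that assms(2) openin_visit_set dense_visit_set by auto
  ultimately have "residual_in ?P (\<Inter>(insert (topspace ?P) ?\<G>))"
    by (rule residual_in_countable_Inter)
  then show ?thesis
    by (rule residual_in_mono) (auto simp: visit_set_def frequently_sequentially)
qed

text \<open>A weakly mixing space with two points is infinite: in a finite space \<open>{p}\<close> and
  \<open>X - {p}\<close> would be open, and no time could map \<open>p\<close> both to \<open>p\<close> and away from it.\<close>
lemma infinite_space:
  assumes "\<exists>x\<in>X. \<exists>y\<in>X. x \<noteq> y"
  shows "infinite X"
proof
  assume "finite X"
  obtain p q where "p \<in> X" "q \<in> X" "p \<noteq> q" using assms by blast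
  have "closedin (top_of_set X) (X - {p})" "closedin (top_of_set X) {p}"
    using \<open>finite X\<close> \<open>p \<in> X\<close> by (auto intro: closed_subset finite_imp_closed)
  then have "openin (top_of_set X) (X - (X - {p}))" "openin (top_of_set X) (X - {p})"
    by (auto intro: openin_diff)
  moreover have "X - (X - {p}) = {p}" using \<open>p \<in> X\<close> by blast
  ultimately have "nonempty_open {p}" "nonempty_open (X - {p})"
    using \<open>q \<in> X\<close> \<open>p \<noteq> q\<close> by auto
  from common_hitting_time[OF this(1,2) this(1,1)]
  obtain n where "n \<in> hitting_times T {p} {p} \<inter> hitting_times T {p} (X - {p})" by blast
  then show False unfolding hitting_times_def by auto
qed

lemma residual_li_yorke_tuples:
  assumes "d > 1" "infinite X"
  shows "\<exists>\<delta>>0. residual_in (power_topology d)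
           {x \<in> topspace (power_topology d). li_yorke_tuple T d \<delta> x}"
proof -
  obtain y :: "nat \<Rightarrow> 'a" where "inj y" "range y \<subseteq> X"
    using infinite_countable_subset[OF assms(2)] by blast
  obtain s where "s > 0" and separated: "\<forall>i<d. \<forall>j<d. i \<noteq> j \<longrightarrow> s \<le> dist (y i) (y j)"
    using finite_points_separated[OF inj_on_subset[OF \<open>inj y\<close> subset_UNIV]] by blast
  define r where "r = s / 4"
  have "r > 0" and separated_4r: "\<forall>i<d. \<forall>j<d. i \<noteq> j \<longrightarrow> 4 * r \<le> dist (y i) (y j)"
    using \<open>s > 0\<close> separated by (simp_all add: r_def)
  have balls_nonempty: "X \<inter> ball (y i) \<rho> \<noteq> {}" if "\<rho> > 0" for i \<rho>
    using that \<open>range y \<subseteq> X\<close> by (metis IntI centre_in_ball empty_iff range_subsetD)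
  let ?close = "\<lambda>m (_::nat). X \<inter> ball (y 0) (inverse (Suc m) / 2)"
  let ?apart = "\<lambda>i. X \<inter> ball (y i) r"
  let ?targets = "insert ?apart (range ?close)"
  have "residual_in (power_topology d) {x \<in> topspace (power_topology d).
      \<forall>C\<in>?targets. \<exists>\<^sub>F n in sequentially. \<forall>i<d. (T ^^ n) (x i) \<in> C i}"
    using \<open>r > 0\<close> balls_nonempty
    by (intro residual_frequent_visits) (auto intro!: openin_open_Int)
  moreover have "li_yorke_tuple T d r x"
    if visits: "\<forall>C\<in>?targets. \<exists>\<^sub>F n in sequentially. \<forall>i<d. (T ^^ n) (x i) \<in> C i" for x
  proof (rule li_yorke_of_frequent_visits[OF \<open>d > 1\<close> \<open>r > 0\<close>])
    show "\<exists>\<^sub>F n in sequentially. \<forall>i<d. (T ^^ n) (x i) \<in> ?close m i" for m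
      using visits[THEN bspec, of "?close m"] by simp
  qed (use visits separated_4r in auto)
  ultimately show ?thesis
    using \<open>r > 0\<close> by (intro exI[of _ r]) (auto elim!: residual_in_mono)
qed

end

theorem mainTheorem9:
  fixes X :: "'a::metric_space set" and T :: "'a \<Rightarrow> 'a"
  assumes "compact X"
    and "\<exists>x\<in>X. \<exists>y\<in>X. x \<noteq> y"
    and "continuous_on X T" and "T ` X \<subseteq> X"
    and "weakly_mixing X T"
  shows "\<forall>d::nat. d > 1 \<longrightarrow> (\<exists>\<delta>>0.
           residual_in (product_topology (\<lambda>_. top_of_set X) {..<d})
             {x \<in> topspace (product_topology (\<lambda>_. top_of_set X) {..<d}). li_yorke_tuple T d \<delta> x})"
proof (intro allI impI)
  fix d :: nat assume "d > 1"
  interpret weakly_mixing_system X T using assms by unfold_locales auto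
  show "\<exists>\<delta>>0. residual_in (power_topology d)
      {x \<in> topspace (power_topology d). li_yorke_tuple T d \<delta> x}"
    using residual_li_yorke_tuples[OF \<open>d > 1\<close> infinite_space[OF assms(2)]] .
qed

end
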